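(* Suppose the Lipschitz assumption holds. Then for each $t\in\mathbb N_T$ there exist constants $K^3_t,K^4_t>0$ such that for every $\gamma\in\mathcal G$ and all $z_1,z_2\in\mathcal I(\mathcal X)$, $$\|\hat f_t(z_1,\gamma)-\hat f_t(z_2,\gamma)\|_\infty\le K^3_t\|z_1-z_2\|_\infty,\qquad |\hat c_t(z_1,\gamma)-\hat c_t(z_2,\gamma)|\le K^4_t\|z_1-z_2\|_\infty.$$
   Context: Let $T\in\mathbb N$, $\mathbb N_T=\{1,\dots,T\}$, $\mathcal X,\mathcal U,\mathcal W$ finite sets, $\mathcal I(\mathcal X)=[0,1]^{\mathcal X}$. For each $t$, let $f_t:\mathcal X\times\mathcal U\times\mathcal W\times\mathcal I(\mathcal X)\to\mathcal X$, let $\mathbb P(w_t=\cdot)$ be a probability law on $\mathcal W$, and $\mathbb P(y|x,u,z)=\sum_w\mathbb 1(f_t(x,u,w,z)=y)\mathbb P(w_t=w)$; let $\ell_t:\mathcal X\times\mathcal U\times\mathcal I(\mathcal X)\to\mathbb R_{\ge0}$. Lipschitz assumption: constants $K^1_t,K^2_t>0$ with $|\mathbb P(y|x,u,z_1)-\mathbb P(y|x,u,z_2)|\le K^1_t\|z_1-z_2\|_\infty$ and $|\ell_t(x,u,z_1)-\ell_t(x,u,z_2)|\le K^2_t\|z_1-z_2\|_\infty$ for all $x,y\in\mathcal X$, $u\in\mathcal U$, $z_1,z_2\in\mathcal I(\mathcal X)$. $\mathcal G$ is the set of all maps $\gamma:\mathcal X\to\mathcal U$. For $z\in\mathcal I(\mathcal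 X)$: $\hat f_t(z,\gamma)(y)=\sum_{x\in\mathcal X}z(x)\mathbb P(y|x,\gamma(x),z)$, $y\in\mathcal X$, and $\hat c_t(z,\gamma)=\sum_x z(x)\ell_t(x,\gamma(x),z)$. *)

theory Defs
  imports "HOL-Analysis.Analysis"
begin

definition supnorm :: "('a::finite \<Rightarrow> real) \<Rightarrow> real" where
  "supnorm v = Max (range (\<lambda>x. \<bar>v x\<bar>))"

definition Iset :: "('a \<Rightarrow> real) set" where
  "Iset = {z. \<forall>x. 0 \<le> z x \<and> z x \<le> 1}"

definition trans_prob ::
  "(nat \<Rightarrow> 'x \<Rightarrow> 'u \<Rightarrow> 'w::finite \<Rightarrow> ('x \<Rightarrow> real) \<Rightarrow> 'x) \<Rightarrow> (nat \<Rightarrow> 'w \<Rightarrow> real)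
   \<Rightarrow> nat \<Rightarrow> 'x \<Rightarrow> 'x \<Rightarrow> 'u \<Rightarrow> ('x \<Rightarrow> real) \<Rightarrow> real" where
  "trans_prob f pw t y x u z = (\<Sum>w\<in>UNIV. (if f t x u w z = y then 1 else 0) * pw t w)"

definition fhat ::
  "(nat \<Rightarrow> 'x::finite \<Rightarrow> 'u \<Rightarrow> 'w::finite \<Rightarrow> ('x \<Rightarrow> real) \<Rightarrow> 'x) \<Rightarrow> (nat \<Rightarrow> 'w \<Rightarrow> real)
   \<Rightarrow> nat \<Rightarrow> ('x \<Rightarrow> real) \<Rightarrow> ('x \<Rightarrow> 'u) \<Rightarrow> ('x \<Rightarrow> real)" where
  "fhat f pw t z \<gamma> = (\<lambda>y. \<Sum>x\<in>UNIV. z x * trans_prob f pw t y x (\<gamma> x) z)"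

definition chat ::
  "(nat \<Rightarrow> 'x::finite \<Rightarrow> 'u \<Rightarrow> ('x \<Rightarrow> real) \<Rightarrow> real)
   \<Rightarrow> nat \<Rightarrow> ('x \<Rightarrow> real) \<Rightarrow> ('x \<Rightarrow> 'u) \<Rightarrow> real" where
  "chat l t z \<gamma> = (\<Sum>x\<in>UNIV. z x * l t x (\<gamma> x) z)"

end

theory Submission
  imports Defs
begin

text \<open>Both \<open>fhat\<close> and \<open>chat\<close> are weighted sums \<open>\<Sum>x. z x * g x z\<close> of functions \<open>g x\<close> that are
  Lipschitz in \<open>z\<close>. Writing \<open>z\<^sub>1 x g\<^sub>1 - z\<^sub>2 x g\<^sub>2 = (z\<^sub>1 x - z\<^sub>2 x) g\<^sub>1 + z\<^sub>2 x (g\<^sub>1 - g\<^sub>2)\<close>, each summand is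
  bounded by \<open>(B + K) \<parallel>z\<^sub>1 - z\<^sub>2\<parallel>\<^sub>\<infinity>\<close> as soon as \<open>g\<close> is bounded by \<open>B\<close> and \<open>0 \<le> z\<^sub>2 \<le> 1\<close>.
  For \<open>fhat\<close> the bound is \<open>B = 1\<close> since transition probabilities lie in \<open>[0, 1]\<close>; for \<open>chat\<close>
  it comes from the Lipschitz estimate against \<open>z = 0\<close>, which lies within sup-distance 1 of
  every \<open>z \<in> Iset\<close>.\<close>

lemma abs_le_supnorm: "\<bar>v x\<bar> \<le> supnorm (v :: 'a::finite \<Rightarrow> real)"
  unfolding supnorm_def by (rule Max_ge) auto

lemma supnorm_leI: "(\<And>x. \<bar>v x\<bar> \<le> c) \<Longrightarrow> supnorm (v :: 'a::finite \<Rightarrow> real) \<le> c"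
  unfolding supnorm_def by (subst Max_le_iff) auto

lemma supnorm_nonneg: "0 \<le> supnorm (v :: 'a::finite \<Rightarrow> real)"
  using abs_le_supnorm[of v undefined] by linarith

lemma Iset_abs_le_one: "z \<in> Iset \<Longrightarrow> \<bar>z x\<bar> \<le> 1"
  unfolding Iset_def by auto

lemma supnorm_Iset_le_one: "z \<in> Iset \<Longrightarrow> supnorm (z :: 'a::finite \<Rightarrow> real) \<le> 1"
  by (rule supnorm_leI) (rule Iset_abs_le_one)

lemma zero_in_Iset: "(\<lambda>_. 0) \<in> Iset"
  unfolding Iset_def by simp

lemma abs_sum_le_card_mult:
  fixes g :: "'a::finite \<Rightarrow> real"
  assumes "\<And>x. \<bar>g x\<bar> \<le> c"
  shows "\<bar>\<Sum>x\<in>UNIV. g x\<bar> \<le> real CARD('a) * c"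
proof -
  have "\<bar>\<Sum>x\<in>UNIV. g x\<bar> \<le> (\<Sum>x\<in>UNIV. \<bar>g x\<bar>)" by (rule sum_abs)
  also have "\<dots> \<le> (\<Sum>x\<in>(UNIV :: 'a set). c)" by (rule sum_mono) (use assms in auto)
  finally show ?thesis by simp
qed

lemma abs_weighted_sum_diff_le:
  fixes z\<^sub>1 z\<^sub>2 g\<^sub>1 g\<^sub>2 :: "'a::finite \<Rightarrow> real"
  assumes "z\<^sub>2 \<in> Iset"
    and bounded: "\<And>x. \<bar>g\<^sub>1 x\<bar> \<le> B"
    and close: "\<And>x. \<bar>g\<^sub>1 x - g\<^sub>2 x\<bar> \<le> K * supnorm (\<lambda>v. z\<^sub>1 v - z\<^sub>2 v)"
  shows "\<bar>(\<Sum>x\<in>UNIV. z\<^sub>1 x * g\<^sub>1 x) - (\<Sum>x\<in>UNIV. z\<^sub>2 x * g\<^sub>2 x)\<bar>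
           \<le> real CARD('a) * (B + K) * supnorm (\<lambda>v. z\<^sub>1 v - z\<^sub>2 v)"
proof -
  define D where "D = supnorm (\<lambda>v. z\<^sub>1 v - z\<^sub>2 v)"
  have summand: "\<bar>(z\<^sub>1 x - z\<^sub>2 x) * g\<^sub>1 x + z\<^sub>2 x * (g\<^sub>1 x - g\<^sub>2 x)\<bar> \<le> (B + K) * D" for x
  proof -
    have "\<bar>(z\<^sub>1 x - z\<^sub>2 x) * g\<^sub>1 x\<bar> \<le> D * B"
      unfolding abs_mult D_def
      by (rule mult_mono) (use abs_le_supnorm[of "\<lambda>v. z\<^sub>1 v - z\<^sub>2 v"] bounded supnorm_nonneg in auto)
    moreover have "\<bar>z\<^sub>2 x * (g\<^sub>1 x - g\<^sub>2 x)\<bar> \<le> K * D"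
      unfolding abs_mult D_def
      using mult_right_mono[OF Iset_abs_le_one[OF \<open>z\<^sub>2 \<in> Iset\<close>], of "\<bar>g\<^sub>1 x - g\<^sub>2 x\<bar>" x]
        close[of x] by simp
    moreover have "(B + K) * D = D * B + K * D" by (simp add: algebra_simps)
    ultimately show ?thesis
      using abs_triangle_ineq[of "(z\<^sub>1 x - z\<^sub>2 x) * g\<^sub>1 x" "z\<^sub>2 x * (g\<^sub>1 x - g\<^sub>2 x)"] by linarith
  qed
  have "(\<Sum>x\<in>UNIV. z\<^sub>1 x * g\<^sub>1 x) - (\<Sum>x\<in>UNIV. z\<^sub>2 x * g\<^sub>2 x)
          = (\<Sum>x\<in>UNIV. (z\<^sub>1 x - z\<^sub>2 x) * g\<^sub>1 x + z\<^sub>2 x * (g\<^sub>1 x - g\<^sub>2 x))"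
    unfolding sum_subtractf[symmetric] by (rule sum.cong) (auto simp: algebra_simps)
  also have "\<bar>\<dots>\<bar> \<le> real CARD('a) * ((B + K) * D)"
    by (rule abs_sum_le_card_mult) (rule summand)
  finally show ?thesis
    unfolding D_def by (simp add: mult.assoc)
qed

lemma trans_prob_nonneg:
  "(\<And>w. pw t w \<ge> 0) \<Longrightarrow> 0 \<le> trans_prob f pw t y x u z"
  unfolding trans_prob_def by (rule sum_nonneg) auto

lemma trans_prob_le_one:
  assumes "\<And>w. pw t w \<ge> 0" "(\<Sum>w\<in>UNIV. pw t w) = 1"
  shows "trans_prob f pw t y x u z \<le> 1"
proof -
  have "trans_prob f pw t y x u z \<le> (\<Sum>w\<in>UNIV. pw t w)"
    unfolding trans_prob_def by (rule sum_mono) (use assms in auto)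
  then show ?thesis using assms by simp
qed

lemma fhat_lipschitz:
  fixes z\<^sub>1 z\<^sub>2 :: "'x::finite \<Rightarrow> real"
  assumes "\<And>w. pw t w \<ge> 0" "(\<Sum>w\<in>UNIV. pw t w) = 1"
    and "z\<^sub>1 \<in> Iset" "z\<^sub>2 \<in> Iset"
    and lipschitz: "\<And>x y u. \<bar>trans_prob f pw t y x u z\<^sub>1 - trans_prob f pw t y x u z\<^sub>2\<bar>
                      \<le> K * supnorm (\<lambda>v. z\<^sub>1 v - z\<^sub>2 v)"
  shows "supnorm (\<lambda>y. fhat f pw t z\<^sub>1 \<gamma> y - fhat f pw t z\<^sub>2 \<gamma> y)
           \<le> real CARD('x) * (1 + K) * supnorm (\<lambda>v. z\<^sub>1 v - z\<^sub>2 v)"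
proof (rule supnorm_leI)
  fix y
  have "\<bar>trans_prob f pw t y x (\<gamma> x) z\<^sub>1\<bar> \<le> 1" for x
    using trans_prob_nonneg trans_prob_le_one assms(1,2) by (metis abs_of_nonneg)
  then show "\<bar>fhat f pw t z\<^sub>1 \<gamma> y - fhat f pw t z\<^sub>2 \<gamma> y\<bar>
               \<le> real CARD('x) * (1 + K) * supnorm (\<lambda>v. z\<^sub>1 v - z\<^sub>2 v)"
    unfolding fhat_def
    by (intro abs_weighted_sum_diff_le[OF \<open>z\<^sub>2 \<in> Iset\<close>] lipschitz)
qed

lemma chat_lipschitz:
  fixes z\<^sub>1 z\<^sub>2 :: "'x::finite \<Rightarrow> real"
  assumes "z\<^sub>2 \<in> Iset"
    and "\<And>x u. \<bar>l t x u z\<^sub>1\<bar> \<le> B"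
    and "\<And>x u. \<bar>l t x u z\<^sub>1 - l t x u z\<^sub>2\<bar> \<le> K * supnorm (\<lambda>v. z\<^sub>1 v - z\<^sub>2 v)"
  shows "\<bar>chat l t z\<^sub>1 \<gamma> - chat l t z\<^sub>2 \<gamma>\<bar>
           \<le> real CARD('x) * (B + K) * supnorm (\<lambda>v. z\<^sub>1 v - z\<^sub>2 v)"
  unfolding chat_def by (rule abs_weighted_sum_diff_le) (use assms in auto)

lemma lipschitz_on_Iset_bounded:
  fixes g :: "('a::finite \<Rightarrow> real) \<Rightarrow> real"
  assumes "z \<in> Iset" "K \<ge> 0"
    and "\<bar>g z - g (\<lambda>_. 0)\<bar> \<le> K * supnorm (\<lambda>v. z v - 0)"
  shows "\<bar>g z\<bar> \<le> \<bar>g (\<lambda>_. 0)\<bar> + K"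
proof -
  have "K * supnorm z \<le> K"
    using supnorm_Iset_le_one[OF \<open>z \<in> Iset\<close>] \<open>K \<ge> 0\<close> by (simp add: mult_left_le)
  then show ?thesis using assms(3) by simp
qed

theorem lemma1:
  fixes T :: nat
    and f :: "nat \<Rightarrow> 'x::finite \<Rightarrow> 'u::finite \<Rightarrow> 'w::finite \<Rightarrow> ('x \<Rightarrow> real) \<Rightarrow> 'x"
    and pw :: "nat \<Rightarrow> 'w \<Rightarrow> real"
    and l :: "nat \<Rightarrow> 'x \<Rightarrow> 'u \<Rightarrow> ('x \<Rightarrow> real) \<Rightarrow> real"
  assumes pw_nonneg: "\<And>t w. t \<in> {1..T} \<Longrightarrow> pw t w \<ge> 0"
    and pw_sum: "\<And>t. t \<in> {1..T} \<Longrightarrow> (\<Sum>w\<in>UNIV. pw t w) = 1"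
    and l_nonneg: "\<And>t x u z. t \<in> {1..T} \<Longrightarrow> z \<in> Iset \<Longrightarrow> l t x u z \<ge> 0"
    and lipschitz: "\<And>t. t \<in> {1..T} \<Longrightarrow> \<exists>K1 K2. K1 > 0 \<and> K2 > 0 \<and>
        (\<forall>x y u z1 z2. z1 \<in> Iset \<longrightarrow> z2 \<in> Iset \<longrightarrow>
           \<bar>trans_prob f pw t y x u z1 - trans_prob f pw t y x u z2\<bar> \<le> K1 * supnorm (\<lambda>v. z1 v - z2 v)) \<and>
        (\<forall>x u z1 z2. z1 \<in> Iset \<longrightarrow> z2 \<in> Iset \<longrightarrow>
           \<bar>l t x u z1 - l t x u z2\<bar> \<le> K2 * supnorm (\<lambda>v. z1 v - z2 v))"
  shows "\<forall>t \<in> {1..T}. \<exists>K3 K4. K3 > 0 \<and> K4 > 0 \<and>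
        (\<forall>\<gamma> z1 z2. z1 \<in> Iset \<longrightarrow> z2 \<in> Iset \<longrightarrow>
           supnorm (\<lambda>y. fhat f pw t z1 \<gamma> y - fhat f pw t z2 \<gamma> y) \<le> K3 * supnorm (\<lambda>v. z1 v - z2 v) \<and>
           \<bar>chat l t z1 \<gamma> - chat l t z2 \<gamma>\<bar> \<le> K4 * supnorm (\<lambda>v. z1 v - z2 v))"
proof
  fix t assume t: "t \<in> {1..T}"
  obtain K1 K2 where "K1 > 0" "K2 > 0"
    and L1: "\<And>x y u z1 z2. z1 \<in> Iset \<Longrightarrow> z2 \<in> Iset \<Longrightarrow>
           \<bar>trans_prob f pw t y x u z1 - trans_prob f pw t y x u z2\<bar> \<le> K1 * supnorm (\<lambda>v. z1 v - z2 v)"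
    and L2: "\<And>x u z1 z2. z1 \<in> Iset \<Longrightarrow> z2 \<in> Iset \<Longrightarrow>
           \<bar>l t x u z1 - l t x u z2\<bar> \<le> K2 * supnorm (\<lambda>v. z1 v - z2 v)"
    using lipschitz[OF t] by blast
  define M where "M = Max (range (\<lambda>(x, u). \<bar>l t x u (\<lambda>_. 0)\<bar>))"
  have l_at_zero: "\<bar>l t x u (\<lambda>_. 0)\<bar> \<le> M" for x u
    unfolding M_def by (rule Max_ge) auto
  have l_bounded: "\<bar>l t x u z\<bar> \<le> M + K2" if "z \<in> Iset" for x u z
    using lipschitz_on_Iset_bounded[OF that, of K2 "l t x u"] L2[OF that zero_in_Iset]
      l_at_zero[of x u] \<open>K2 > 0\<close> by simp
  have "M \<ge> 0" using l_at_zero[of undefined undefined] by linarith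
  show "\<exists>K3 K4. K3 > 0 \<and> K4 > 0 \<and>
        (\<forall>\<gamma> z1 z2. z1 \<in> Iset \<longrightarrow> z2 \<in> Iset \<longrightarrow>
           supnorm (\<lambda>y. fhat f pw t z1 \<gamma> y - fhat f pw t z2 \<gamma> y) \<le> K3 * supnorm (\<lambda>v. z1 v - z2 v) \<and>
           \<bar>chat l t z1 \<gamma> - chat l t z2 \<gamma>\<bar> \<le> K4 * supnorm (\<lambda>v. z1 v - z2 v))"
  proof (intro exI conjI allI impI)
    show "real CARD('x) * (1 + K1) > 0" "real CARD('x) * (M + K2 + K2) > 0"
      using \<open>K1 > 0\<close> \<open>K2 > 0\<close> \<open>M \<ge> 0\<close> by simp_all
    fix \<gamma> :: "'x \<Rightarrow> 'u" and z1 z2 :: "'x \<Rightarrow> real"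
    assume "z1 \<in> Iset" "z2 \<in> Iset"
    then show "supnorm (\<lambda>y. fhat f pw t z1 \<gamma> y - fhat f pw t z2 \<gamma> y)
                 \<le> real CARD('x) * (1 + K1) * supnorm (\<lambda>v. z1 v - z2 v)"
      by (intro fhat_lipschitz pw_nonneg[OF t] pw_sum[OF t] L1)
    show "\<bar>chat l t z1 \<gamma> - chat l t z2 \<gamma>\<bar>
            \<le> real CARD('x) * (M + K2 + K2) * supnorm (\<lambda>v. z1 v - z2 v)"
      using \<open>z1 \<in> Iset\<close> \<open>z2 \<in> Iset\<close> by (intro chat_lipschitz l_bounded L2)
  qed
qed

end
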